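(* In the setting below, for every $0<\alpha<d-1$, $$\sum_jr_j^{d-1+\alpha}\le C\tau^\alpha,$$ where $C$ depends only on $\alpha,\gamma,d,\Omega$ (and the $L^{p,\infty}$ bound of $(\varkappa\circ n)^{-1}$), not on $\tau$.
   Context: Let $\Omega\subset\mathbb{R}^d$ be a bounded smooth domain, fix $\mu>0$, and assume $(\varkappa\circ n)^{-1}\in L^{p,\infty}(\partial\Omega,d\sigma)$ for some $p\in(0,d-1]$, i.e. $\sup_{t>0}t^p\sigma\{x\in\partial\Omega:\varkappa(n(x))^{-1}>t\}<\infty$; here $n$ is the outer unit normal, $\sigma$ surface measure, and $\varkappa(n)=\inf_{\xi\in\mathbb{Z}^d\setminus\{0\}}|(I-n\otimes n)\xi||\xi|^\mu$. Put $\gamma=(d-1)/p$ and $F=\varkappa(n(\cdot))^{1/\gamma}$. Fix $x_0\in\partial\Omega$, $r_0>0$ small; let $P(x)=x-((x-x_0)\cdot n(x_0))n(x_0)$ be the projection onto the tangent plane $T$ at $x_0$, a bijection from a neighborhood of $x_0$ in $\partial\Omega$ onto a region of $T$ containing $6Q_0$, where $Q_0\subset T$ is a cube with $B(x_0,2r_0)\cap\partial\Omega\subset P^{-1}(Q_0)\subset B(x_0,4r_0\sqrt d)\cap\partial\Omega$. For small $\tau>0$, $\{Q_j\}$ with side lengths $r_j$ are the maximal dyadic subcubes $Q$ of $Q_0$ satisfying $\|F\circ P^{-1}\|_{L^\infty(6Q)}\le\tau/\ell(Q)$; they form a finite partition of $Q_0$ with pairwise disjoint interiors. *)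

theory Defs
  imports "HOL-Analysis.Analysis"
begin

coinductive smooth_on :: "'a::euclidean_space set \<Rightarrow> ('a \<Rightarrow> real) \<Rightarrow> bool" where
  "continuous_on U f \<Longrightarrow>
   (\<forall>b\<in>Basis. \<exists>g. (\<forall>x\<in>U. ((\<lambda>t. f (x + t *\<^sub>R b)) has_real_derivative g x) (at 0))
                 \<and> smooth_on U g) \<Longrightarrow> smooth_on U f"

definition smooth_boundary_normal :: "'a::euclidean_space set \<Rightarrow> ('a \<Rightarrow> 'a) \<Rightarrow> bool" where
  "smooth_boundary_normal \<Omega> n \<longleftrightarrow>
     (\<forall>x\<in>frontier \<Omega>. \<exists>U \<rho> G. open U \<and> x \<in> U \<and> smooth_on U \<rho> \<and>
        (\<forall>y\<in>U. (\<rho> has_derivative (\<lambda>h. G y \<bullet> h)) (at y) \<and> G y \<noteq> 0) \<and>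
        \<Omega> \<inter> U = {y\<in>U. \<rho> y < 0} \<and>
        (\<forall>y\<in>U \<inter> frontier \<Omega>. n y = (1 / norm (G y)) *\<^sub>R G y))"

definition hausdorff_normalization :: "real \<Rightarrow> real" where
  "hausdorff_normalization s = pi powr (s / 2) / Gamma (s / 2 + 1)"

definition hausdorff_content :: "real \<Rightarrow> real \<Rightarrow> 'a::metric_space set \<Rightarrow> ennreal" where
  "hausdorff_content s \<delta> A =
     (INF C\<in>{C :: nat \<Rightarrow> 'a set. A \<subseteq> (\<Union>i. C i) \<and> (\<forall>i. bounded (C i) \<and> diameter (C i) \<le> \<delta>)}.
        (\<Sum>i. ennreal (hausdorff_normalization s * (diameter (C i) / 2) powr s)))"

text \<open>s-dimensional Hausdorff (outer) measure; for s = d-1 on a smooth hypersurface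
  this is the surface measure, and on a hyperplane it is (d-1)-dim Lebesgue measure.\<close>

definition hausdorff_measure :: "real \<Rightarrow> 'a::metric_space set \<Rightarrow> ennreal" where
  "hausdorff_measure s A = (SUP \<delta>\<in>{0<..}. hausdorff_content s \<delta> A)"

definition int_lattice :: "'a::euclidean_space set" where
  "int_lattice = {\<xi>. \<forall>b\<in>Basis. \<xi> \<bullet> b \<in> \<int>}"

definition kappa :: "real \<Rightarrow> 'a::euclidean_space \<Rightarrow> real" where
  "kappa \<mu> \<nu> = Inf {norm (\<xi> - (\<nu> \<bullet> \<xi>) *\<^sub>R \<nu>) * norm \<xi> powr \<mu> | \<xi>. \<xi> \<in> int_lattice \<and> \<xi> \<noteq> 0}"

definition tproj :: "'a::euclidean_space \<Rightarrow> 'a \<Rightarrow> 'a \<Rightarrow> 'a" where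
  "tproj x0 \<nu> x = x - ((x - x0) \<bullet> \<nu>) *\<^sub>R \<nu>"

definition cube :: "(nat \<Rightarrow> 'a::euclidean_space) \<Rightarrow> nat \<Rightarrow> 'a \<Rightarrow> real \<Rightarrow> 'a set" where
  "cube e m c l = {c + (\<Sum>i<m. t i *\<^sub>R e i) | t. \<forall>i<m. \<bar>t i\<bar> \<le> l / 2}"

text \<open>Dyadic subcubes of the cube Q0 = cube e m c0 l0, indexed by generation k and
  multi-index j (with j i < 2^k for i < m and j i = 0 otherwise).\<close>

definition dyadic_index :: "nat \<Rightarrow> nat \<times> (nat \<Rightarrow> nat) \<Rightarrow> bool" where
  "dyadic_index m q \<longleftrightarrow> (\<forall>i. (i < m \<longrightarrow> snd q i < 2 ^ fst q) \<and> (m \<le> i \<longrightarrow> snd q i = 0))"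

definition dyadic_side :: "real \<Rightarrow> nat \<times> (nat \<Rightarrow> nat) \<Rightarrow> real" where
  "dyadic_side l0 q = l0 / 2 ^ fst q"

definition dyadic_centre :: "(nat \<Rightarrow> 'a::euclidean_space) \<Rightarrow> nat \<Rightarrow> 'a \<Rightarrow> real \<Rightarrow> nat \<times> (nat \<Rightarrow> nat) \<Rightarrow> 'a" where
  "dyadic_centre e m c0 l0 q =
     c0 + (\<Sum>i<m. ((real (snd q i) + 1/2) * dyadic_side l0 q - l0 / 2) *\<^sub>R e i)"

definition dyadic_cube :: "(nat \<Rightarrow> 'a::euclidean_space) \<Rightarrow> nat \<Rightarrow> 'a \<Rightarrow> real \<Rightarrow> real \<Rightarrow> nat \<times> (nat \<Rightarrow> nat) \<Rightarrow> 'a set" where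
  "dyadic_cube e m c0 l0 a q = cube e m (dyadic_centre e m c0 l0 q) (a * dyadic_side l0 q)"

text \<open>Stopping condition  ||G||_{L^\<infinity>(6Q)} \<le> \<tau> / l(Q), where the L^\<infinity> norm is with respect
  to (m-dimensional) Lebesgue = Hausdorff measure on the tangent plane.\<close>

definition good_cube :: "(nat \<Rightarrow> 'a::euclidean_space) \<Rightarrow> nat \<Rightarrow> 'a \<Rightarrow> real \<Rightarrow> ('a \<Rightarrow> real) \<Rightarrow> real \<Rightarrow> nat \<times> (nat \<Rightarrow> nat) \<Rightarrow> bool" where
  "good_cube e m c0 l0 G \<tau> q \<longleftrightarrow>
     hausdorff_measure (real m) {y \<in> dyadic_cube e m c0 l0 6 q. \<bar>G y\<bar> > \<tau> / dyadic_side l0 q} = 0"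

definition maximal_good_cubes :: "(nat \<Rightarrow> 'a::euclidean_space) \<Rightarrow> nat \<Rightarrow> 'a \<Rightarrow> real \<Rightarrow> ('a \<Rightarrow> real) \<Rightarrow> real \<Rightarrow> (nat \<times> (nat \<Rightarrow> nat)) set" where
  "maximal_good_cubes e m c0 l0 G \<tau> =
     {q. dyadic_index m q \<and> good_cube e m c0 l0 G \<tau> q \<and>
         \<not> (\<exists>q'. dyadic_index m q' \<and> good_cube e m c0 l0 G \<tau> q' \<and>
                 dyadic_cube e m c0 l0 1 q \<subset> dyadic_cube e m c0 l0 1 q')}"

end

theory Submission
  imports Defs
begin

text \<open>Group the good dyadic cubes by generation \<open>k\<close>; all of them have side \<open>s = l0 / 2^k\<close>.
  Being disjoint subcubes of \<open>Q0\<close>, there are at most \<open>(l0 / s)^m\<close> of them. On a good cube the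
  stopping condition forces \<open>\<kappa> \<circ> n \<le> (\<tau> / s)^(m/p)\<close> off a null set, so the union of the cubes
  lies, up to a null set, in the 1-Lipschitz projection of a sublevel set of \<open>\<kappa> \<circ> n\<close>; comparing
  area with Hausdorff measure, the weak \<open>L^p\<close> bound gives at most \<open>K (\<tau> / s)^m\<close> cubes. A generation
  therefore contributes at most \<open>min (l0^m s^\<alpha>) (K \<tau>^m s^(\<alpha>-m))\<close>, and the two geometric series
  (first bound for \<open>s < \<tau>\<close>, second for \<open>s \<ge> \<tau>\<close>) sum to \<open>C \<tau>^\<alpha>\<close>.\<close>

lemma INF_ennreal_add_const_on:
  fixes f :: "'b \<Rightarrow> ennreal"
  shows "(INF a\<in>S. f a + c) = (INF a\<in>S. f a) + c"
  using continuous_at_Inf_mono[of "\<lambda>x. x + c" "f ` S"]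
    continuous_add[of "at_right (Inf (f ` S))" "\<lambda>x. x" "\<lambda>x. c"]
  by (cases "S = {}") (auto simp: mono_def image_comp)

lemma ennreal_le_const_mult_INF:
  assumes "0 < c" and "\<And>a. a \<in> S \<Longrightarrow> x \<le> ennreal c * f a"
  shows "x \<le> ennreal c * (INF a\<in>S. f a)"
proof -
  have inverse: "ennreal c * ennreal (1 / c) = 1"
    using \<open>0 < c\<close> by (simp flip: ennreal_mult)
  have "ennreal (1 / c) * x \<le> f a" if "a \<in> S" for a
  proof -
    have "ennreal (1 / c) * x \<le> ennreal (1 / c) * (ennreal c * f a)"
      using assms(2)[OF that] by (rule mult_left_mono) simp
    then show ?thesis using inverse by (simp add: mult.assoc[symmetric] mult.commute)
  qed
  then have "ennreal c * (ennreal (1 / c) * x) \<le> ennreal c * (INF a\<in>S. f a)"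
    by (intro mult_left_mono INF_greatest) auto
  then show ?thesis using inverse by (simp add: mult.assoc[symmetric])
qed

lemma ennreal_le_divide_of_mult_le:
  assumes "0 < c" and "ennreal c * x \<le> ennreal M"
  shows "x \<le> ennreal (max M 0 / c)"
proof (cases x)
  case (real r)
  have "ennreal (c * r) \<le> ennreal (max M 0)"
    using assms real by (simp add: ennreal_mult order_trans[OF _ ennreal_leI])
  then have "c * r \<le> max M 0" by simp
  then show ?thesis using real \<open>0 < c\<close> by (simp add: ennreal_leI field_simps)
next
  case top
  then show ?thesis using assms by (simp add: ennreal_mult_top top_unique)
qed

lemma infsum_ennreal_le_of_finite_sums:
  assumes "\<And>x. 0 \<le> f x" and "\<And>F. finite F \<Longrightarrow> F \<subseteq> A \<Longrightarrow> (\<Sum>x\<in>F. f x) \<le> b"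
  shows "(\<Sum>\<^sub>\<infinity>x\<in>A. ennreal (f x)) \<le> ennreal b"
proof (rule infsum_le_finite_sums)
  show "(\<lambda>x. ennreal (f x)) summable_on A" by (rule nonneg_summable_on_complete) simp
  fix F assume "finite F" "F \<subseteq> A"
  then show "(\<Sum>x\<in>F. ennreal (f x)) \<le> ennreal b"
    using assms by (simp add: ennreal_leI)
qed

section \<open>Hausdorff content\<close>

definition hausdorff_covers :: "real \<Rightarrow> 'a::metric_space set \<Rightarrow> (nat \<Rightarrow> 'a set) set" where
  "hausdorff_covers \<delta> A = {C. A \<subseteq> (\<Union>i. C i) \<and> (\<forall>i. bounded (C i) \<and> diameter (C i) \<le> \<delta>)}"

definition hausdorff_sum :: "real \<Rightarrow> (nat \<Rightarrow> 'a::metric_space set) \<Rightarrow> ennreal" where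
  "hausdorff_sum s C = (\<Sum>i. ennreal (hausdorff_normalization s * (diameter (C i) / 2) powr s))"

lemma hausdorff_content_eq_INF:
  "hausdorff_content s \<delta> A = (INF C\<in>hausdorff_covers \<delta> A. hausdorff_sum s C)"
  unfolding hausdorff_content_def hausdorff_covers_def hausdorff_sum_def by simp

lemma hausdorff_content_mono: "A \<subseteq> B \<Longrightarrow> hausdorff_content s \<delta> A \<le> hausdorff_content s \<delta> B"
  unfolding hausdorff_content_eq_INF
  by (rule INF_superset_mono) (auto simp: hausdorff_covers_def)

lemma hausdorff_content_le_measure: "hausdorff_content s 1 A \<le> hausdorff_measure s A"
  unfolding hausdorff_measure_def by (rule SUP_upper) auto

lemma hausdorff_normalization_pos: "0 \<le> s \<Longrightarrow> 0 < hausdorff_normalization s"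
  unfolding hausdorff_normalization_def by (intro divide_pos_pos) simp_all

lemma hausdorff_sum_interleave:
  "hausdorff_sum s (\<lambda>i. if even i then C (i div 2) else D (i div 2))
     = hausdorff_sum s C + hausdorff_sum s D"
proof -
  define h where "h X = ennreal (hausdorff_normalization s * (diameter X / 2) powr s)" for X :: "'a set"
  define E where "E i = (if even i then C (i div 2) else D (i div 2))" for i
  have "(\<lambda>i. sum (h \<circ> E) {i * 2..<i * 2 + 2}) sums (\<Sum>i. h (E i))"
    using sums_group[OF summable_sums[OF summableI], of 2] by (simp add: comp_def)
  moreover have "sum (h \<circ> E) {i * 2..<i * 2 + 2} = h (C i) + h (D i)" for i
  proof -
    have "{i * 2..<i * 2 + 2} = {2 * i, 2 * i + 1}" by auto
    then show ?thesis by (simp add: E_def comp_def)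
  qed
  ultimately have "(\<Sum>i. h (E i)) = (\<Sum>i. h (C i) + h (D i))"
    by (simp add: sums_iff)
  also have "\<dots> = (\<Sum>i. h (C i)) + (\<Sum>i. h (D i))"
    by (intro suminf_add[symmetric] summableI)
  finally show ?thesis unfolding hausdorff_sum_def h_def E_def .
qed

lemma hausdorff_content_Un:
  "hausdorff_content s \<delta> (A \<union> B) \<le> hausdorff_content s \<delta> A + hausdorff_content s \<delta> B"
proof -
  have sum_le: "hausdorff_content s \<delta> (A \<union> B) \<le> hausdorff_sum s C + hausdorff_sum s D"
    if C: "C \<in> hausdorff_covers \<delta> A" and D: "D \<in> hausdorff_covers \<delta> B" for C D
  proof -
    let ?E = "\<lambda>i. if even i then C (i div 2) else D (i div 2)"
    have "C i \<subseteq> (\<Union>i. ?E i)" "D i \<subseteq> (\<Union>i. ?E i)" for i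
      using UN_upper[of "2 * i" UNIV ?E] UN_upper[of "2 * i + 1" UNIV ?E] by simp_all
    then have "A \<union> B \<subseteq> (\<Union>i. ?E i)"
      using C D unfolding hausdorff_covers_def by blast
    moreover have "bounded (?E i) \<and> diameter (?E i) \<le> \<delta>" for i
      using C D unfolding hausdorff_covers_def by simp
    ultimately have "?E \<in> hausdorff_covers \<delta> (A \<union> B)"
      unfolding hausdorff_covers_def by blast
    then show ?thesis
      unfolding hausdorff_content_eq_INF hausdorff_sum_interleave[symmetric] by (rule INF_lower)
  qed
  show ?thesis
    unfolding hausdorff_content_eq_INF INF_ennreal_add_const_on[symmetric]
  proof (intro INF_greatest)
    fix C assume C: "C \<in> hausdorff_covers \<delta> A"
    have "hausdorff_content s \<delta> (A \<union> B) \<le> (INF D\<in>hausdorff_covers \<delta> B. hausdorff_sum s C + hausdorff_sum s D)"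
      by (rule INF_greatest, rule sum_le[OF C])
    also have "\<dots> = hausdorff_sum s C + (INF D\<in>hausdorff_covers \<delta> B. hausdorff_sum s D)"
      using INF_ennreal_add_const_on[where f="hausdorff_sum s" and c="hausdorff_sum s C"] by (simp add: add.commute)
    finally show "(INF C\<in>hausdorff_covers \<delta> (A \<union> B). hausdorff_sum s C)
        \<le> hausdorff_sum s C + (INF D\<in>hausdorff_covers \<delta> B. hausdorff_sum s D)"
      unfolding hausdorff_content_eq_INF .
  qed
qed

lemma hausdorff_content_Un_UN_null:
  assumes "finite F" and "\<And>q. q \<in> F \<Longrightarrow> hausdorff_content s \<delta> (N q) = 0"
  shows "hausdorff_content s \<delta> (A \<union> (\<Union>q\<in>F. N q)) \<le> hausdorff_content s \<delta> A"
  using assms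
proof (induction F rule: finite_induct)
  case (insert q F)
  have "hausdorff_content s \<delta> (A \<union> (\<Union>q\<in>insert q F. N q))
      \<le> hausdorff_content s \<delta> (A \<union> (\<Union>q\<in>F. N q)) + hausdorff_content s \<delta> (N q)"
    using hausdorff_content_Un[of s \<delta> "A \<union> (\<Union>q\<in>F. N q)" "N q"] by (simp add: Un_ac)
  with insert show ?case by simp
qed simp

lemma lipschitz_image_bounded_diameter:
  fixes f :: "'a::real_normed_vector \<Rightarrow> 'b::real_normed_vector"
  assumes f: "1-lipschitz_on UNIV f" and C: "bounded C"
  shows "bounded (f ` C)" and "diameter (f ` C) \<le> diameter C"
proof -
  have dist_le: "dist (f x) (f y) \<le> dist x y" for x y
    using lipschitz_onD[OF f] by simp
  from C obtain a r where "C \<subseteq> cball a r" using bounded_subset_cball by blast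
  then have "f ` C \<subseteq> cball (f a) r"
    using dist_le order_trans unfolding subset_iff mem_cball image_iff by metis
  then show "bounded (f ` C)" using bounded_cball bounded_subset by blast
  show "diameter (f ` C) \<le> diameter C"
  proof (cases "C = {}")
    case False
    show ?thesis
    proof (rule diameter_le)
      fix x y assume "x \<in> f ` C" "y \<in> f ` C"
      then obtain u v where "u \<in> C" "v \<in> C" "x = f u" "y = f v" by auto
      then show "norm (x - y) \<le> diameter C"
        using dist_le[of u v] diameter_bounded_bound[OF C, of u v] by (simp add: dist_norm)
    qed (use False in simp)
  qed simp
qed

lemma hausdorff_content_lipschitz_image:
  fixes f :: "'a::real_normed_vector \<Rightarrow> 'b::real_normed_vector"
  assumes f: "1-lipschitz_on UNIV f" and "0 \<le> s"
  shows "hausdorff_content s \<delta> (f ` A) \<le> hausdorff_content s \<delta> A"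
  unfolding hausdorff_content_eq_INF
proof (rule INF_greatest)
  fix C assume C: "C \<in> hausdorff_covers \<delta> A"
  note image = lipschitz_image_bounded_diameter[OF f]
  have "f ` A \<subseteq> (\<Union>i. f ` C i)"
    using C unfolding hausdorff_covers_def by blast
  moreover have "bounded (f ` C i) \<and> diameter (f ` C i) \<le> \<delta>" for i
  proof -
    have "bounded (C i)" "diameter (C i) \<le> \<delta>" using C by (simp_all add: hausdorff_covers_def)
    then show ?thesis using image[of "C i"] by simp
  qed
  ultimately have "(\<lambda>i. f ` C i) \<in> hausdorff_covers \<delta> (f ` A)"
    unfolding hausdorff_covers_def by blast
  then have "(INF D\<in>hausdorff_covers \<delta> (f ` A). hausdorff_sum s D) \<le> hausdorff_sum s (\<lambda>i. f ` C i)"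
    by (rule INF_lower)
  also have "\<dots> \<le> hausdorff_sum s C"
    unfolding hausdorff_sum_def
  proof (intro suminf_le allI ennreal_leI mult_left_mono powr_mono2 divide_right_mono)
    fix i
    have "bounded (C i)" using C unfolding hausdorff_covers_def by blast
    then show "diameter (f ` C i) \<le> diameter (C i)" "0 \<le> diameter (f ` C i) / 2"
      using image diameter_ge_0 by auto
  qed (use \<open>0 \<le> s\<close> hausdorff_normalization_pos in \<open>auto intro: less_imp_le\<close>)
  finally show "(INF D\<in>hausdorff_covers \<delta> (f ` A). hausdorff_sum s D) \<le> hausdorff_sum s C" .
qed

section \<open>Dyadic subcubes and the stopping condition\<close>

lemma cube_mono: "l \<le> l' \<Longrightarrow> cube e m c l \<subseteq> cube e m c l'"
  unfolding cube_def by (auto intro: order_trans divide_right_mono)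

lemma cube_side_less:
  assumes "0 < m" and "norm (e 0) = 1" and "0 \<le> l"
    and near: "\<And>y. y \<in> cube e m c l \<Longrightarrow> dist z y < R"
  shows "l < 2 * R"
proof -
  have corner: "c + a *\<^sub>R e 0 \<in> cube e m c l" if "\<bar>a\<bar> \<le> l / 2" for a
  proof -
    have "(\<Sum>i<m. (if i = 0 then a else 0) *\<^sub>R e i) = (\<Sum>i<m. if i = 0 then a *\<^sub>R e i else 0)"
      by (rule sum.cong) auto
    also have "\<dots> = a *\<^sub>R e 0"
      using \<open>0 < m\<close> by simp
    finally have "(\<Sum>i<m. (if i = 0 then a else 0) *\<^sub>R e i) = a *\<^sub>R e 0" .
    then show ?thesis
      unfolding cube_def using that \<open>0 \<le> l\<close>
      by (intro CollectI exI[of _ "\<lambda>i. if i = 0 then a else 0"]) auto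
  qed
  have "l = dist (c + (l / 2) *\<^sub>R e 0) (c + (- l / 2) *\<^sub>R e 0)"
    using \<open>norm (e 0) = 1\<close> \<open>0 \<le> l\<close> by (simp add: dist_norm flip: scaleR_add_left)
  also have "\<dots> \<le> dist z (c + (l / 2) *\<^sub>R e 0) + dist z (c + (- l / 2) *\<^sub>R e 0)"
    by (rule dist_triangle3)
  also have "\<dots> < 2 * R"
    using near[OF corner, of "l / 2"] near[OF corner, of "- l / 2"] \<open>0 \<le> l\<close> by simp
  finally show ?thesis .
qed

definition dyadic_offset :: "real \<Rightarrow> nat \<times> (nat \<Rightarrow> nat) \<Rightarrow> nat \<Rightarrow> real" where
  "dyadic_offset l0 q i = (real (snd q i) + 1/2) * dyadic_side l0 q - l0 / 2"

lemma dyadic_centre_eq: "dyadic_centre e m c0 l0 q = c0 + (\<Sum>i<m. dyadic_offset l0 q i *\<^sub>R e i)"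
  unfolding dyadic_centre_def dyadic_offset_def by simp

lemma dyadic_side_bounds:
  assumes "dyadic_index m q" and "0 < l0" and "i < m"
  shows "0 < dyadic_side l0 q" and "dyadic_side l0 q \<le> l0"
    and "(real (snd q i) + 1) * dyadic_side l0 q \<le> l0"
proof -
  have "snd q i < 2 ^ fst q" using assms unfolding dyadic_index_def by auto
  then have "real (snd q i) + 1 \<le> 2 ^ fst q"
    by (metis Suc_leI of_nat_Suc of_nat_le_iff of_nat_numeral of_nat_power add.commute)
  then have "(real (snd q i) + 1) * (l0 / 2 ^ fst q) \<le> 2 ^ fst q * (l0 / 2 ^ fst q)"
    using assms by (intro mult_right_mono) auto
  then show "(real (snd q i) + 1) * dyadic_side l0 q \<le> l0" unfolding dyadic_side_def by simp
  show "0 < dyadic_side l0 q" using assms unfolding dyadic_side_def by simp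
  have "(1::real) \<le> 2 ^ fst q" by simp
  then show "dyadic_side l0 q \<le> l0" using assms unfolding dyadic_side_def
    by (simp add: divide_le_eq)
qed

lemma dyadic_cube_mono:
  "0 < l0 \<Longrightarrow> 0 \<le> a \<Longrightarrow> a \<le> b \<Longrightarrow> dyadic_cube e m c0 l0 a q \<subseteq> dyadic_cube e m c0 l0 b q"
  unfolding dyadic_cube_def by (rule cube_mono, rule mult_right_mono) (auto simp: dyadic_side_def)

lemma dyadic_cube_subset_cube:
  assumes q: "dyadic_index m q" and "0 < l0" and "0 \<le> a" "a \<le> 6"
  shows "dyadic_cube e m c0 l0 a q \<subseteq> cube e m c0 (6 * l0)"
proof
  fix x assume "x \<in> dyadic_cube e m c0 l0 a q"
  then obtain t where x: "x = dyadic_centre e m c0 l0 q + (\<Sum>i<m. t i *\<^sub>R e i)"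
    and t: "\<forall>i<m. \<bar>t i\<bar> \<le> a * dyadic_side l0 q / 2"
    unfolding dyadic_cube_def cube_def by auto
  have "x = c0 + (\<Sum>i<m. (dyadic_offset l0 q i + t i) *\<^sub>R e i)"
    unfolding x dyadic_centre_eq scaleR_add_left sum.distrib by (simp only: add.assoc)
  moreover have "\<bar>dyadic_offset l0 q i + t i\<bar> \<le> 6 * l0 / 2" if i: "i < m" for i
  proof -
    note side = dyadic_side_bounds[OF q \<open>0 < l0\<close> i]
    have "a * dyadic_side l0 q \<le> 6 * dyadic_side l0 q"
      using \<open>a \<le> 6\<close> side(1) by (intro mult_right_mono) auto
    then have "\<bar>t i\<bar> \<le> 3 * dyadic_side l0 q"
      using t i by fastforce
    moreover have "0 \<le> real (snd q i) * dyadic_side l0 q" using side by simp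
    moreover have "dyadic_offset l0 q i = real (snd q i) * dyadic_side l0 q + dyadic_side l0 q / 2 - l0 / 2"
      unfolding dyadic_offset_def by (simp add: algebra_simps)
    moreover have "real (snd q i) * dyadic_side l0 q + dyadic_side l0 q \<le> l0"
      using side(3) by (simp add: algebra_simps)
    ultimately show ?thesis using side(1,2) unfolding abs_le_iff by linarith
  qed
  ultimately show "x \<in> cube e m c0 (6 * l0)" unfolding cube_def
    by (intro CollectI exI[of _ "\<lambda>i. dyadic_offset l0 q i + t i"] conjI allI impI) auto
qed

lemma dyadic_cube_subset_image:
  assumes "dyadic_index m q" and "0 < l0" and "cube e m c0 (6 * l0) \<subseteq> P ` V"
  shows "dyadic_cube e m c0 l0 1 q \<subseteq>
    P ` {x \<in> V. \<bar>G (P x)\<bar> \<le> \<tau> / dyadic_side l0 q}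
    \<union> {y \<in> dyadic_cube e m c0 l0 6 q. \<tau> / dyadic_side l0 q < \<bar>G y\<bar>}"
proof
  fix y assume y: "y \<in> dyadic_cube e m c0 l0 1 q"
  then have y6: "y \<in> dyadic_cube e m c0 l0 6 q"
    using dyadic_cube_mono[OF \<open>0 < l0\<close>, where a=1 and b=6 and q=q] by auto
  moreover have "dyadic_cube e m c0 l0 6 q \<subseteq> cube e m c0 (6 * l0)"
    by (rule dyadic_cube_subset_cube[OF assms(1,2)]) simp_all
  ultimately have "y \<in> P ` V" using assms(3) by blast
  then obtain x where "x \<in> V" "y = P x" by blast
  then show "y \<in> P ` {x \<in> V. \<bar>G (P x)\<bar> \<le> \<tau> / dyadic_side l0 q}
      \<union> {y \<in> dyadic_cube e m c0 l0 6 q. \<tau> / dyadic_side l0 q < \<bar>G y\<bar>}"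
    using y6 by (cases "\<bar>G y\<bar> \<le> \<tau> / dyadic_side l0 q") auto
qed

lemma hausdorff_content_good_dyadic_cubes_le:
  fixes P :: "'a::euclidean_space \<Rightarrow> 'a" and kap :: "'a \<Rightarrow> real"
  assumes "0 < m" "0 < p" "0 < l0"
    and cover: "cube e m c0 (6 * l0) \<subseteq> P ` V" and "inj_on P V" and kap_nonneg: "\<And>x. 0 \<le> kap x"
    and "finite F"
    and F: "\<And>q. q \<in> F \<Longrightarrow> dyadic_index m q \<and> dyadic_side l0 q = s \<and>
      good_cube e m c0 l0 (\<lambda>y. kap (the_inv_into V P y) powr (1 / (real m / p))) \<tau> q"
  shows "hausdorff_content (real m) 1 (\<Union>q\<in>F. dyadic_cube e m c0 l0 1 q)
    \<le> hausdorff_content (real m) 1 (P ` {x \<in> V. kap x \<le> (\<tau> / s) powr (real m / p)})"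
proof -
  define G where "G = (\<lambda>y. kap (the_inv_into V P y) powr (1 / (real m / p)))"
  define N where "N q = {y \<in> dyadic_cube e m c0 l0 6 q. \<tau> / dyadic_side l0 q < \<bar>G y\<bar>}" for q
  have sublevel: "{x \<in> V. \<bar>G (P x)\<bar> \<le> \<tau> / s} \<subseteq> {x \<in> V. kap x \<le> (\<tau> / s) powr (real m / p)}"
  proof safe
    fix x assume "x \<in> V" and "\<bar>G (P x)\<bar> \<le> \<tau> / s"
    then have "kap x powr (1 / (real m / p)) \<le> \<tau> / s"
      using the_inv_into_f_f[OF \<open>inj_on P V\<close> \<open>x \<in> V\<close>] by (simp add: G_def)
    then have "(kap x powr (1 / (real m / p))) powr (real m / p) \<le> (\<tau> / s) powr (real m / p)"
      using \<open>0 < m\<close> \<open>0 < p\<close> by (intro powr_mono2) auto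
    then show "kap x \<le> (\<tau> / s) powr (real m / p)"
      using kap_nonneg[of x] \<open>0 < m\<close> \<open>0 < p\<close> by (simp add: powr_powr)
  qed
  have "(\<Union>q\<in>F. dyadic_cube e m c0 l0 1 q)
      \<subseteq> P ` {x \<in> V. kap x \<le> (\<tau> / s) powr (real m / p)} \<union> (\<Union>q\<in>F. N q)"
    using dyadic_cube_subset_image[OF _ \<open>0 < l0\<close> cover, of _ G \<tau>] F sublevel
    unfolding N_def by fastforce
  then have "hausdorff_content (real m) 1 (\<Union>q\<in>F. dyadic_cube e m c0 l0 1 q)
      \<le> hausdorff_content (real m) 1 (P ` {x \<in> V. kap x \<le> (\<tau> / s) powr (real m / p)} \<union> (\<Union>q\<in>F. N q))"
    by (rule hausdorff_content_mono)
  also have "\<dots> \<le> hausdorff_content (real m) 1 (P ` {x \<in> V. kap x \<le> (\<tau> / s) powr (real m / p)})"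
  proof (rule hausdorff_content_Un_UN_null[OF \<open>finite F\<close>])
    fix q assume "q \<in> F"
    then have "good_cube e m c0 l0 G \<tau> q" using F unfolding G_def by blast
    then have "hausdorff_measure (real m) (N q) = 0" unfolding good_cube_def N_def .
    then show "hausdorff_content (real m) 1 (N q) = 0"
      using hausdorff_content_le_measure[of "real m" "N q"] by simp
  qed
  finally show ?thesis .
qed

section \<open>Area in the tangent plane as ambient Lebesgue measure\<close>

text \<open>\<open>(2 * diameter C)^m\<close>, the area of a square containing \<open>C\<close>, is \<open>slab_constant m\<close> times
  the \<open>m\<close>-dimensional Hausdorff summand of \<open>C\<close>.\<close>

definition slab_constant :: "nat \<Rightarrow> real" where
  "slab_constant m = 4 ^ m / hausdorff_normalization (real m)"

text \<open>The tangent coordinates along \<open>e\<close> are transplanted onto the first \<open>m\<close> members of an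
  enumeration \<open>bb\<close> of \<open>Basis\<close>, and sets are thickened to unit height along \<open>bb m\<close>; this
  turns \<open>m\<close>-dimensional area into Lebesgue measure of the ambient space.\<close>

locale tangent_frame =
  fixes bb :: "nat \<Rightarrow> 'a::euclidean_space" and m :: nat and e :: "nat \<Rightarrow> 'a" and c0 :: 'a
  assumes bij_basis: "bij_betw bb {..<Suc m} Basis"
    and orthonormal: "\<And>i j. i < m \<Longrightarrow> j < m \<Longrightarrow> e i \<bullet> e j = (if i = j then 1 else 0)"
begin

lemma Basis_eq: "Basis = bb ` {..<Suc m}"
  using bij_basis by (auto simp: bij_betw_def)

lemma inner_bb: "i < Suc m \<Longrightarrow> j < Suc m \<Longrightarrow> bb i \<bullet> bb j = (if i = j then 1 else 0)"
  using bij_basis by (auto simp: inner_Basis bij_betw_def inj_on_def Basis_eq)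

lemma norm_e: "i < m \<Longrightarrow> norm (e i) = 1"
  using orthonormal[of i i] by (simp add: norm_eq_sqrt_inner)

lemma inner_sum_e: "k < m \<Longrightarrow> (\<Sum>i<m. t i *\<^sub>R e i) \<bullet> e k = t k"
  unfolding inner_sum_left by (simp add: orthonormal if_distrib cong: if_cong)

definition point :: "(nat \<Rightarrow> real) \<Rightarrow> 'a" where
  "point f = (\<Sum>i<Suc m. f i *\<^sub>R bb i)"

lemma inner_point: "k < Suc m \<Longrightarrow> point f \<bullet> bb k = f k"
  unfolding point_def inner_sum_left by (simp add: inner_bb if_distrib cong: if_cong)

lemma point_cong: "(\<And>i. i < Suc m \<Longrightarrow> f i = g i) \<Longrightarrow> point f = point g"
  unfolding point_def by (intro sum.cong) auto

lemma point_coordinates: "point (\<lambda>i. z \<bullet> bb i) = z"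
proof -
  have "point (\<lambda>i. z \<bullet> bb i) = (\<Sum>b\<in>Basis. (z \<bullet> b) *\<^sub>R b)"
    unfolding point_def using sum.reindex_bij_betw[OF bij_basis, of "\<lambda>b. (z \<bullet> b) *\<^sub>R b"] by simp
  then show ?thesis by (simp add: euclidean_representation)
qed

lemma mem_box_point:
  "z \<in> box (point f) (point g) \<longleftrightarrow> (\<forall>k<Suc m. f k < z \<bullet> bb k \<and> z \<bullet> bb k < g k)"
  "z \<in> cbox (point f) (point g) \<longleftrightarrow> (\<forall>k<Suc m. f k \<le> z \<bullet> bb k \<and> z \<bullet> bb k \<le> g k)"
  unfolding mem_box Basis_eq by (auto simp: inner_point)

lemma emeasure_box_point:
  assumes "\<And>k. k < Suc m \<Longrightarrow> f k \<le> g k"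
  shows "emeasure lborel (box (point f) (point g)) = ennreal (\<Prod>k<Suc m. g k - f k)"
    and "emeasure lborel (cbox (point f) (point g)) = ennreal (\<Prod>k<Suc m. g k - f k)"
proof -
  have le: "\<And>b. b \<in> Basis \<Longrightarrow> point f \<bullet> b \<le> point g \<bullet> b"
    by (auto simp: Basis_eq inner_point assms)
  have "prod ((\<bullet>) (point g - point f)) Basis = (\<Prod>k<Suc m. (point g - point f) \<bullet> bb k)"
    using prod.reindex_bij_betw[OF bij_basis, of "(\<bullet>) (point g - point f)"] by simp
  also have "\<dots> = (\<Prod>k<Suc m. g k - f k)"
    by (intro prod.cong) (auto simp: inner_diff_left inner_point)
  finally show "emeasure lborel (box (point f) (point g)) = ennreal (\<Prod>k<Suc m. g k - f k)"
    and "emeasure lborel (cbox (point f) (point g)) = ennreal (\<Prod>k<Suc m. g k - f k)"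
    using emeasure_lborel_box[OF le] emeasure_lborel_cbox[OF le] by simp_all
qed

definition flatten :: "'a \<Rightarrow> 'a" where
  "flatten y = (\<Sum>i<m. (e i \<bullet> (y - c0)) *\<^sub>R bb i)"

lemma flatten_add_height: "flatten y + t *\<^sub>R bb m = point (\<lambda>i. if i < m then e i \<bullet> (y - c0) else t)"
  unfolding flatten_def point_def by simp

definition slab :: "'a set \<Rightarrow> 'a set" where
  "slab Y = {flatten y + t *\<^sub>R bb m | y t. y \<in> Y \<and> \<bar>t\<bar> \<le> 1/2}"

definition enclosing_box :: "'a set \<Rightarrow> 'a set" where
  "enclosing_box C = (if C = {} then {} else
     (let c = SOME c. c \<in> C in
      cbox (point (\<lambda>i. if i < m then e i \<bullet> (c - c0) - diameter C else -1/2))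
           (point (\<lambda>i. if i < m then e i \<bullet> (c - c0) + diameter C else 1/2))))"

lemma enclosing_box_sets: "enclosing_box C \<in> sets lborel"
  unfolding enclosing_box_def Let_def by auto

lemma slab_subset_enclosing_box:
  assumes "bounded C"
  shows "slab C \<subseteq> enclosing_box C"
proof
  fix z assume "z \<in> slab C"
  then obtain y t where z: "z = flatten y + t *\<^sub>R bb m" and y: "y \<in> C" and t: "\<bar>t\<bar> \<le> 1/2"
    unfolding slab_def by auto
  define c where "c = (SOME c. c \<in> C)"
  have "c \<in> C" unfolding c_def using y by (rule someI)
  then have "norm (y - c) \<le> diameter C"
    using diameter_bounded_bound[OF assms y] by (simp add: dist_norm)
  then have "\<bar>e k \<bullet> (y - c0) - e k \<bullet> (c - c0)\<bar> \<le> diameter C" if "k < m" for k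
    using Cauchy_Schwarz_ineq2[of "e k" "y - c"] norm_e[OF that] by (simp add: inner_diff_right)
  then have "e k \<bullet> (c - c0) - diameter C \<le> e k \<bullet> (y - c0) \<and> e k \<bullet> (y - c0) \<le> e k \<bullet> (c - c0) + diameter C"
    if "k < m" for k
    using that by (smt (verit))
  moreover have "enclosing_box C =
      cbox (point (\<lambda>i. if i < m then e i \<bullet> (c - c0) - diameter C else -1/2))
           (point (\<lambda>i. if i < m then e i \<bullet> (c - c0) + diameter C else 1/2))"
    using y unfolding enclosing_box_def c_def Let_def by auto
  ultimately show "z \<in> enclosing_box C"
    using t unfolding z flatten_add_height
    by (simp add: mem_box_point inner_point less_Suc_eq) linarith
qed

lemma emeasure_enclosing_box:
  assumes "bounded C" and "0 < m"
  shows "emeasure lborel (enclosing_box C)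
    \<le> ennreal (slab_constant m) * ennreal (hausdorff_normalization (real m) * (diameter C / 2) powr real m)"
proof (cases "C = {}")
  case False
  have d: "0 \<le> diameter C" using diameter_ge_0[OF assms(1)] .
  have "emeasure lborel (enclosing_box C) = ennreal ((2 * diameter C) ^ m)"
    unfolding enclosing_box_def if_not_P[OF False] Let_def
    using d by (subst emeasure_box_point) auto
  also have "(2 * diameter C) ^ m = 4 ^ m * (diameter C / 2) ^ m"
    using power_mult_distrib[of 4 "diameter C / 2" m] by simp
  also have "\<dots> = slab_constant m * (hausdorff_normalization (real m) * (diameter C / 2) powr real m)"
    using d assms(2) hausdorff_normalization_pos[of "real m"]
    by (cases "diameter C = 0") (simp_all add: slab_constant_def powr_realpow)
  also have "ennreal \<dots>
      = ennreal (slab_constant m) * ennreal (hausdorff_normalization (real m) * (diameter C / 2) powr real m)"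
    using hausdorff_normalization_pos[of "real m"] d
    by (intro ennreal_mult mult_nonneg_nonneg divide_nonneg_pos) (auto simp: slab_constant_def)
  finally show ?thesis by (rule eq_refl)
qed (simp add: enclosing_box_def)

lemma emeasure_le_hausdorff_content:
  assumes "0 < m" and E: "E \<in> sets lborel" "E \<subseteq> slab A"
  shows "emeasure lborel E \<le> ennreal (slab_constant m) * hausdorff_content (real m) 1 A"
  unfolding hausdorff_content_eq_INF
proof (rule ennreal_le_const_mult_INF)
  show "0 < slab_constant m"
    using hausdorff_normalization_pos[of "real m"] by (simp add: slab_constant_def)
  fix C assume C: "C \<in> hausdorff_covers 1 A"
  then have bounded: "bounded (C i)" for i unfolding hausdorff_covers_def by blast
  have "E \<subseteq> (\<Union>i. enclosing_box (C i))"
  proof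
    fix z assume "z \<in> E"
    then obtain y t where z: "z = flatten y + t *\<^sub>R bb m" and "y \<in> A" "\<bar>t\<bar> \<le> 1/2"
      using E unfolding slab_def by auto
    then obtain i where "y \<in> C i" using C unfolding hausdorff_covers_def by blast
    then have "z \<in> slab (C i)" unfolding slab_def z using \<open>\<bar>t\<bar> \<le> 1/2\<close> by auto
    then show "z \<in> (\<Union>i. enclosing_box (C i))" using slab_subset_enclosing_box[OF bounded] by blast
  qed
  then have "emeasure lborel E \<le> emeasure lborel (\<Union>i. enclosing_box (C i))"
    using enclosing_box_sets by (intro emeasure_mono) auto
  also have "\<dots> \<le> (\<Sum>i. emeasure lborel (enclosing_box (C i)))"
    using enclosing_box_sets by (intro emeasure_subadditive_countably) auto
  also have "\<dots> \<le> (\<Sum>i. ennreal (slab_constant m)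
      * ennreal (hausdorff_normalization (real m) * (diameter (C i) / 2) powr real m))"
    using emeasure_enclosing_box[OF bounded \<open>0 < m\<close>] by (intro suminf_le) auto
  also have "\<dots> = ennreal (slab_constant m) * hausdorff_sum (real m) C"
    unfolding hausdorff_sum_def by (rule ennreal_suminf_cmult)
  finally show "emeasure lborel E \<le> ennreal (slab_constant m) * hausdorff_sum (real m) C" .
qed

definition dyadic_box :: "real \<Rightarrow> nat \<times> (nat \<Rightarrow> nat) \<Rightarrow> 'a set" where
  "dyadic_box l0 q =
     box (point (\<lambda>i. if i < m then real (snd q i) * dyadic_side l0 q - l0/2 else -1/2))
         (point (\<lambda>i. if i < m then (real (snd q i) + 1) * dyadic_side l0 q - l0/2 else 1/2))"

lemma dyadic_box_sets: "dyadic_box l0 q \<in> sets lborel"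
  unfolding dyadic_box_def by simp

lemma mem_dyadic_box:
  "z \<in> dyadic_box l0 q \<longleftrightarrow>
     (\<forall>i<m. real (snd q i) * dyadic_side l0 q - l0/2 < z \<bullet> bb i
            \<and> z \<bullet> bb i < (real (snd q i) + 1) * dyadic_side l0 q - l0/2)
     \<and> \<bar>z \<bullet> bb m\<bar> < 1/2"
  unfolding dyadic_box_def mem_box_point by (auto simp: less_Suc_eq abs_less_iff)

lemma emeasure_dyadic_box:
  assumes "0 < l0"
  shows "emeasure lborel (dyadic_box l0 q) = ennreal (dyadic_side l0 q ^ m)"
proof -
  have "0 < dyadic_side l0 q" using assms by (simp add: dyadic_side_def)
  then show ?thesis
    unfolding dyadic_box_def by (subst emeasure_box_point) (auto simp: algebra_simps)
qed

lemma dyadic_box_subset_slab: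
  assumes "dyadic_index m q" and "0 < l0"
  shows "dyadic_box l0 q \<subseteq> slab (dyadic_cube e m c0 l0 1 q)"
proof
  fix z assume z: "z \<in> dyadic_box l0 q"
  define y where "y = c0 + (\<Sum>i<m. (z \<bullet> bb i) *\<^sub>R e i)"
  have "y = dyadic_centre e m c0 l0 q + (\<Sum>i<m. (z \<bullet> bb i - dyadic_offset l0 q i) *\<^sub>R e i)"
    unfolding y_def dyadic_centre_eq by (simp add: scaleR_diff_left sum_subtractf)
  moreover have "\<bar>z \<bullet> bb i - dyadic_offset l0 q i\<bar> \<le> 1 * dyadic_side l0 q / 2" if "i < m" for i
  proof -
    have "real (snd q i) * dyadic_side l0 q - l0/2 < z \<bullet> bb i"
      and "z \<bullet> bb i < (real (snd q i) + 1) * dyadic_side l0 q - l0/2"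
      using z that unfolding mem_dyadic_box by blast+
    then show ?thesis unfolding dyadic_offset_def abs_le_iff by (simp add: algebra_simps)
  qed
  ultimately have "y \<in> dyadic_cube e m c0 l0 1 q"
    unfolding dyadic_cube_def cube_def
    by (intro CollectI exI[of _ "\<lambda>i. z \<bullet> bb i - dyadic_offset l0 q i"] conjI allI impI)
  moreover have "z = flatten y + (z \<bullet> bb m) *\<^sub>R bb m"
  proof -
    have "e k \<bullet> (\<Sum>i<m. (z \<bullet> bb i) *\<^sub>R e i) = z \<bullet> bb k" if "k < m" for k
      using inner_sum_e[OF that, of "\<lambda>i. z \<bullet> bb i"] by (simp add: inner_commute)
    then have "flatten y + (z \<bullet> bb m) *\<^sub>R bb m = point (\<lambda>i. z \<bullet> bb i)"
      unfolding flatten_add_height y_def by (intro point_cong) (auto simp: less_Suc_eq)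
    then show ?thesis by (simp add: point_coordinates)
  qed
  moreover have "\<bar>z \<bullet> bb m\<bar> \<le> 1/2" using z unfolding mem_dyadic_box by simp
  ultimately show "z \<in> slab (dyadic_cube e m c0 l0 1 q)"
    unfolding slab_def by blast
qed

lemma dyadic_box_disjoint:
  assumes "dyadic_index m q" "dyadic_index m q'" and "fst q = fst q'" and "q \<noteq> q'"
  shows "dyadic_box l0 q \<inter> dyadic_box l0 q' = {}"
proof -
  obtain i where i: "snd q i \<noteq> snd q' i"
    using assms(3,4) by (metis ext prod_eq_iff)
  then have "i < m" using assms(1,2) unfolding dyadic_index_def by (metis leI)
  have side: "dyadic_side l0 q' = dyadic_side l0 q" using assms(3) unfolding dyadic_side_def by simp
  show ?thesis
  proof (rule ccontr)
    assume "dyadic_box l0 q \<inter> dyadic_box l0 q' \<noteq> {}"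
    then obtain z where "z \<in> dyadic_box l0 q" "z \<in> dyadic_box l0 q'" by auto
    then have "real (snd q i) * dyadic_side l0 q < (real (snd q' i) + 1) * dyadic_side l0 q"
      and "real (snd q' i) * dyadic_side l0 q < (real (snd q i) + 1) * dyadic_side l0 q"
      using \<open>i < m\<close> unfolding mem_dyadic_box side by (smt (verit))+
    then have "real (snd q i) < real (snd q' i) + 1" "real (snd q' i) < real (snd q i) + 1"
      by (auto simp: mult_less_cancel_right split: if_splits)
    then show False using i by linarith
  qed
qed

lemma emeasure_UN_dyadic_box:
  assumes "0 < l0" and "finite F" and F: "\<And>q. q \<in> F \<Longrightarrow> dyadic_index m q \<and> fst q = k"
  shows "emeasure lborel (\<Union>q\<in>F. dyadic_box l0 q) = ennreal (real (card F) * (l0 / 2 ^ k) ^ m)"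
proof -
  have "disjoint_family_on (dyadic_box l0) F"
    unfolding disjoint_family_on_def using F dyadic_box_disjoint by metis
  then have "emeasure lborel (\<Union>q\<in>F. dyadic_box l0 q) = (\<Sum>q\<in>F. emeasure lborel (dyadic_box l0 q))"
    using \<open>finite F\<close> dyadic_box_sets by (intro sum_emeasure[symmetric]) auto
  also have "\<dots> = (\<Sum>q\<in>F. ennreal ((l0 / 2 ^ k) ^ m))"
    using F by (intro sum.cong refl) (simp add: emeasure_dyadic_box[OF \<open>0 < l0\<close>] dyadic_side_def)
  finally show ?thesis
    using \<open>0 < l0\<close> by (simp add: ennreal_mult ennreal_of_nat_eq_real_of_nat)
qed

lemma card_dyadic_generation_le:
  assumes "0 < l0" and "finite F" and F: "\<And>q. q \<in> F \<Longrightarrow> dyadic_index m q \<and> fst q = k"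
  shows "real (card F) * (l0 / 2 ^ k) ^ m \<le> l0 ^ m"
proof -
  define B where "B = box (point (\<lambda>i. if i < m then - l0/2 else -1/2)) (point (\<lambda>i. if i < m then l0/2 else 1/2))"
  have "(\<Union>q\<in>F. dyadic_box l0 q) \<subseteq> B"
  proof
    fix z assume "z \<in> (\<Union>q\<in>F. dyadic_box l0 q)"
    then obtain q where q: "q \<in> F" and z: "z \<in> dyadic_box l0 q" by auto
    have "- l0/2 < z \<bullet> bb i \<and> z \<bullet> bb i < l0/2" if i: "i < m" for i
    proof -
      note side = dyadic_side_bounds[OF conjunct1[OF F[OF q]] \<open>0 < l0\<close> i]
      have "real (snd q i) * dyadic_side l0 q - l0/2 < z \<bullet> bb i"
        and "z \<bullet> bb i < (real (snd q i) + 1) * dyadic_side l0 q - l0/2"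
        using z i unfolding mem_dyadic_box by blast+
      moreover have "0 \<le> real (snd q i) * dyadic_side l0 q" using side by simp
      ultimately show ?thesis using side by linarith
    qed
    then show "z \<in> B"
      using z unfolding B_def mem_box_point mem_dyadic_box by (auto simp: less_Suc_eq abs_less_iff)
  qed
  then have "emeasure lborel (\<Union>q\<in>F. dyadic_box l0 q) \<le> emeasure lborel B"
    unfolding B_def by (intro emeasure_mono) auto
  also have "\<dots> = ennreal (l0 ^ m)"
    unfolding B_def using \<open>0 < l0\<close> by (subst emeasure_box_point) auto
  finally show ?thesis
    using \<open>0 < l0\<close> by (simp add: emeasure_UN_dyadic_box[OF \<open>0 < l0\<close> \<open>finite F\<close> F])
qed

lemma card_dyadic_generation_le_hausdorff_content:
  assumes "0 < m" "0 < l0" and "finite F" and F: "\<And>q. q \<in> F \<Longrightarrow> dyadic_index m q \<and> fst q = k"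
  shows "ennreal (real (card F) * (l0 / 2 ^ k) ^ m)
    \<le> ennreal (slab_constant m) * hausdorff_content (real m) 1 (\<Union>q\<in>F. dyadic_cube e m c0 l0 1 q)"
proof -
  have "(\<Union>q\<in>F. dyadic_box l0 q) \<subseteq> slab (\<Union>q\<in>F. dyadic_cube e m c0 l0 1 q)"
  proof (rule UN_least)
    fix q assume "q \<in> F"
    then have "dyadic_box l0 q \<subseteq> slab (dyadic_cube e m c0 l0 1 q)"
      using dyadic_box_subset_slab F \<open>0 < l0\<close> by blast
    also have "\<dots> \<subseteq> slab (\<Union>q\<in>F. dyadic_cube e m c0 l0 1 q)"
      using \<open>q \<in> F\<close> unfolding slab_def by blast
    finally show "dyadic_box l0 q \<subseteq> slab (\<Union>q\<in>F. dyadic_cube e m c0 l0 1 q)" .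
  qed
  then have "emeasure lborel (\<Union>q\<in>F. dyadic_box l0 q)
      \<le> ennreal (slab_constant m) * hausdorff_content (real m) 1 (\<Union>q\<in>F. dyadic_cube e m c0 l0 1 q)"
    using \<open>finite F\<close> dyadic_box_sets by (intro emeasure_le_hausdorff_content[OF \<open>0 < m\<close>]) auto
  then show ?thesis
    by (simp add: emeasure_UN_dyadic_box[OF \<open>0 < l0\<close> \<open>finite F\<close> F])
qed

lemma card_good_dyadic_generation_le:
  fixes P :: "'a \<Rightarrow> 'a" and kap :: "'a \<Rightarrow> real"
  assumes "0 < m" "0 < p" "0 < \<tau>" "0 < l0"
    and "cube e m c0 (6 * l0) \<subseteq> P ` V" and "inj_on P V" and "1-lipschitz_on UNIV P"
    and "V \<subseteq> V'" and "\<And>x. 0 \<le> kap x"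
    and weak: "\<And>t. 0 < t \<Longrightarrow>
      ennreal (t powr p) * hausdorff_measure (real m) {x \<in> V'. kap x < 1 / t} \<le> ennreal M"
    and "finite F"
    and F: "\<And>q. q \<in> F \<Longrightarrow> dyadic_index m q \<and> fst q = k \<and>
      good_cube e m c0 l0 (\<lambda>y. kap (the_inv_into V P y) powr (1 / (real m / p))) \<tau> q"
  shows "real (card F) * (l0 / 2 ^ k) ^ m
    \<le> slab_constant m * max M 0 * 2 powr p * (\<tau> / (l0 / 2 ^ k)) ^ m"
proof -
  define s where "s = l0 / 2 ^ k"
  define t where "t = (s / \<tau>) powr (real m / p) / 2"
  have "0 < s" "0 < t" using \<open>0 < l0\<close> \<open>0 < \<tau>\<close> by (simp_all add: s_def t_def)
  have "(\<tau> / s) powr (real m / p) < 2 * (\<tau> / s) powr (real m / p)"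
    using \<open>0 < s\<close> \<open>0 < \<tau>\<close> by simp
  also have "\<dots> = 1 / t" by (simp add: t_def powr_divide)
  finally have sublevel: "{x \<in> V. kap x \<le> (\<tau> / s) powr (real m / p)} \<subseteq> {x \<in> V'. kap x < 1 / t}"
    using \<open>V \<subseteq> V'\<close> by auto
  have "hausdorff_content (real m) 1 (\<Union>q\<in>F. dyadic_cube e m c0 l0 1 q)
      \<le> hausdorff_content (real m) 1 (P ` {x \<in> V. kap x \<le> (\<tau> / s) powr (real m / p)})"
    using F by (intro hausdorff_content_good_dyadic_cubes_le[OF assms(1,2,4-6,9,11)])
      (auto simp: s_def dyadic_side_def)
  also have "\<dots> \<le> hausdorff_content (real m) 1 {x \<in> V. kap x \<le> (\<tau> / s) powr (real m / p)}"
    using \<open>1-lipschitz_on UNIV P\<close> by (rule hausdorff_content_lipschitz_image) simp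
  also have "\<dots> \<le> hausdorff_content (real m) 1 {x \<in> V'. kap x < 1 / t}"
    using sublevel by (rule hausdorff_content_mono)
  also have "\<dots> \<le> hausdorff_measure (real m) {x \<in> V'. kap x < 1 / t}"
    by (rule hausdorff_content_le_measure)
  also have "\<dots> \<le> ennreal (max M 0 / t powr p)"
    using \<open>0 < t\<close> weak[OF \<open>0 < t\<close>] by (intro ennreal_le_divide_of_mult_le) auto
  finally have "ennreal (real (card F) * s ^ m) \<le> ennreal (slab_constant m) * ennreal (max M 0 / t powr p)"
    using card_dyadic_generation_le_hausdorff_content[OF \<open>0 < m\<close> \<open>0 < l0\<close> \<open>finite F\<close>, of k] F
    unfolding s_def by (meson mult_left_mono order_trans zero_le)
  then have "real (card F) * s ^ m \<le> slab_constant m * (max M 0 / t powr p)"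
    using hausdorff_normalization_pos[of "real m"]
    by (simp add: slab_constant_def ennreal_mult[symmetric])
  also have "t powr p = (s / \<tau>) ^ m / 2 powr p"
  proof -
    have "t powr p = ((s / \<tau>) powr (real m / p)) powr p / 2 powr p"
      unfolding t_def by (rule powr_divide)
    also have "((s / \<tau>) powr (real m / p)) powr p = (s / \<tau>) ^ m"
      using \<open>0 < s\<close> \<open>0 < \<tau>\<close> \<open>0 < p\<close> by (simp only: powr_powr) (simp add: powr_realpow)
    finally show ?thesis .
  qed
  finally show ?thesis
    using \<open>0 < s\<close> \<open>0 < \<tau>\<close> unfolding s_def by (simp add: power_divide mult_ac)
qed

lemma sum_good_dyadic_generation_le:
  fixes P :: "'a \<Rightarrow> 'a" and kap :: "'a \<Rightarrow> real"
  assumes "0 < m" "0 < p" "0 < \<tau>" "0 < l0"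
    and "cube e m c0 (6 * l0) \<subseteq> P ` V" and "inj_on P V" and "1-lipschitz_on UNIV P"
    and "V \<subseteq> V'" and "\<And>x. 0 \<le> kap x"
    and "\<And>t. 0 < t \<Longrightarrow>
      ennreal (t powr p) * hausdorff_measure (real m) {x \<in> V'. kap x < 1 / t} \<le> ennreal M"
    and "finite F"
    and F: "\<And>q. q \<in> F \<Longrightarrow> dyadic_index m q \<and> fst q = k \<and>
      good_cube e m c0 l0 (\<lambda>y. kap (the_inv_into V P y) powr (1 / (real m / p))) \<tau> q"
  shows "(\<Sum>q\<in>F. dyadic_side l0 q powr (real m + \<alpha>))
    \<le> min (l0 ^ m * (l0 / 2 ^ k) powr \<alpha>)
          (slab_constant m * max M 0 * 2 powr p * \<tau> powr real m * (l0 / 2 ^ k) powr (\<alpha> - real m))"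
proof -
  define s where "s = l0 / 2 ^ k"
  have "0 < s" unfolding s_def using \<open>0 < l0\<close> by simp
  have sum_eq: "(\<Sum>q\<in>F. dyadic_side l0 q powr (real m + \<alpha>)) = real (card F) * s ^ m * s powr \<alpha>"
    using F \<open>0 < s\<close> by (simp add: s_def dyadic_side_def powr_add powr_realpow)
  have "real (card F) * s ^ m \<le> l0 ^ m"
    unfolding s_def using F by (intro card_dyadic_generation_le[OF \<open>0 < l0\<close> \<open>finite F\<close>]) auto
  then have packing: "real (card F) * s ^ m * s powr \<alpha> \<le> l0 ^ m * s powr \<alpha>"
    by (rule mult_right_mono) simp
  have "real (card F) * s ^ m \<le> slab_constant m * max M 0 * 2 powr p * (\<tau> / s) ^ m"
    unfolding s_def using F by (intro card_good_dyadic_generation_le[OF assms(1-11)]) auto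
  then have "real (card F) * s ^ m * s powr \<alpha>
      \<le> slab_constant m * max M 0 * 2 powr p * ((\<tau> / s) ^ m * s powr \<alpha>)"
    by (simp add: mult_right_mono mult.assoc[symmetric])
  also have "(\<tau> / s) ^ m * s powr \<alpha> = \<tau> powr real m * s powr (\<alpha> - real m)"
    using \<open>0 < s\<close> \<open>0 < \<tau>\<close> by (simp add: powr_diff powr_realpow power_divide)
  finally show ?thesis
    using packing unfolding sum_eq s_def[symmetric] by (simp add: mult.assoc)
qed

end

section \<open>Geometric sums over generations\<close>

lemma sum_le_geometric_series:
  fixes f :: "nat \<Rightarrow> real"
  assumes "finite S" and "inj_on h S" and "\<And>k. k \<in> S \<Longrightarrow> f k \<le> r ^ h k" and "0 \<le> r" "r < 1"
  shows "sum f S \<le> 1 / (1 - r)"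
proof -
  obtain N where N: "h ` S \<subseteq> {..<N}"
    using finite_nat_bounded[OF finite_imageI[OF \<open>finite S\<close>]] by blast
  have "sum f S \<le> (\<Sum>k\<in>S. r ^ h k)" using assms(3) by (rule sum_mono)
  also have "\<dots> = (\<Sum>j\<in>h ` S. r ^ j)" using sum.reindex[OF \<open>inj_on h S\<close>, of "\<lambda>j. r ^ j"] by simp
  also have "\<dots> \<le> (\<Sum>j<N. r ^ j)" using N \<open>0 \<le> r\<close> by (intro sum_mono2) auto
  also have "\<dots> = (1 - r ^ N) / (1 - r)" using \<open>r < 1\<close> by (simp add: sum_gp_strict)
  also have "\<dots> \<le> 1 / (1 - r)" using assms(4,5) by (intro divide_right_mono) auto
  finally show ?thesis .
qed

lemma powr_inverse_power_of_two: "(1 / 2 ^ j :: real) powr a = (2 powr (- a)) ^ j"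
  by (simp add: powr_minus_divide powr_realpow[symmetric] powr_powr powr_divide flip: powr_power)

lemma sum_powr_halving_le:
  fixes a y :: real
  assumes "0 < a" and "0 < y"
  shows "(\<Sum>k\<in>{k. k < N \<and> y / 2 ^ k < 1}. (y / 2 ^ k) powr a) \<le> 1 / (1 - 2 powr (- a))"
proof (cases "{k. k < N \<and> y / 2 ^ k < 1} = {}")
  case True
  have "2 powr - a < 1" using \<open>0 < a\<close> by (intro powr_less_one) auto
  then show ?thesis unfolding True by simp
next
  case False
  define S where "S = {k. k < N \<and> y / 2 ^ k < 1}"
  have "finite S" unfolding S_def by simp
  define k0 where "k0 = Min S"
  have k0: "k0 \<in> S" "\<And>k. k \<in> S \<Longrightarrow> k0 \<le> k"
    using Min_in[OF \<open>finite S\<close>] Min_le[OF \<open>finite S\<close>] False unfolding k0_def S_def by auto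
  show ?thesis unfolding S_def[symmetric]
  proof (rule sum_le_geometric_series[OF \<open>finite S\<close>, of "\<lambda>k. k - k0"])
    show "inj_on (\<lambda>k. k - k0) S" using k0(2) by (auto simp: inj_on_def) (metis le_add_diff_inverse)
    fix k assume k: "k \<in> S"
    have "y / 2 ^ k = (y / 2 ^ k0) / 2 ^ (k - k0)"
      using k0(2)[OF k] by (simp add: power_diff)
    also have "\<dots> \<le> 1 / 2 ^ (k - k0)"
      using k0(1) unfolding S_def by (intro divide_right_mono) auto
    finally have "(y / 2 ^ k) powr a \<le> (1 / 2 ^ (k - k0)) powr a"
      using \<open>0 < y\<close> \<open>0 < a\<close> by (intro powr_mono2) auto
    then show "(y / 2 ^ k) powr a \<le> (2 powr - a) ^ (k - k0)" by (simp only: powr_inverse_power_of_two)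
  qed (use \<open>0 < a\<close> in \<open>auto intro: powr_less_one\<close>)
qed

lemma sum_powr_doubling_le:
  fixes a y :: real
  assumes "0 < a" and "0 < y"
  shows "(\<Sum>k\<in>{k. k < N \<and> y * 2 ^ k \<le> 1}. (y * 2 ^ k) powr a) \<le> 1 / (1 - 2 powr (- a))"
proof (cases "{k. k < N \<and> y * 2 ^ k \<le> 1} = {}")
  case True
  have "2 powr - a < 1" using \<open>0 < a\<close> by (intro powr_less_one) auto
  then show ?thesis unfolding True by simp
next
  case False
  define S where "S = {k. k < N \<and> y * 2 ^ k \<le> 1}"
  have "finite S" unfolding S_def by simp
  define k1 where "k1 = Max S"
  have k1: "k1 \<in> S" "\<And>k. k \<in> S \<Longrightarrow> k \<le> k1"
    using Max_in[OF \<open>finite S\<close>] Max_ge[OF \<open>finite S\<close>] False unfolding k1_def S_def by auto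
  show ?thesis unfolding S_def[symmetric]
  proof (rule sum_le_geometric_series[OF \<open>finite S\<close>, of "\<lambda>k. k1 - k"])
    show "inj_on (\<lambda>k. k1 - k) S" using k1(2) by (auto simp: inj_on_def) (metis diff_diff_cancel)
    fix k assume k: "k \<in> S"
    have "y * 2 ^ k = (y * 2 ^ k1) / 2 ^ (k1 - k)"
      using k1(2)[OF k] by (simp add: power_diff)
    also have "\<dots> \<le> 1 / 2 ^ (k1 - k)"
      using k1(1) unfolding S_def by (intro divide_right_mono) auto
    finally have "(y * 2 ^ k) powr a \<le> (1 / 2 ^ (k1 - k)) powr a"
      using \<open>0 < y\<close> \<open>0 < a\<close> by (intro powr_mono2) auto
    then show "(y * 2 ^ k) powr a \<le> (2 powr - a) ^ (k1 - k)" by (simp only: powr_inverse_power_of_two)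
  qed (use \<open>0 < a\<close> in \<open>auto intro: powr_less_one\<close>)
qed

lemma sum_min_dyadic_powr_le:
  fixes \<alpha> \<beta> \<tau> l A B :: real
  assumes "0 < \<alpha>" "\<alpha> < \<beta>" "0 < \<tau>" "0 < l" "0 \<le> A" "0 \<le> B"
  shows "(\<Sum>k<N. min (A * (l / 2 ^ k) powr \<alpha>) (B * \<tau> powr \<beta> * (l / 2 ^ k) powr (\<alpha> - \<beta>)))
    \<le> (A / (1 - 2 powr (- \<alpha>)) + B / (1 - 2 powr (- (\<beta> - \<alpha>)))) * \<tau> powr \<alpha>"
proof -
  define small where "small = {k. k < N \<and> l / \<tau> / 2 ^ k < 1}"
  define large where "large = {k. k < N \<and> \<tau> / l * 2 ^ k \<le> 1}"
  have "{..<N} = small \<union> large" "small \<inter> large = {}"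
    using \<open>0 < \<tau>\<close> \<open>0 < l\<close> by (auto simp: small_def large_def field_simps)
  then have "(\<Sum>k<N. min (A * (l / 2 ^ k) powr \<alpha>) (B * \<tau> powr \<beta> * (l / 2 ^ k) powr (\<alpha> - \<beta>)))
      \<le> (\<Sum>k\<in>small. A * (l / 2 ^ k) powr \<alpha>) + (\<Sum>k\<in>large. B * \<tau> powr \<beta> * (l / 2 ^ k) powr (\<alpha> - \<beta>))"
    by (simp add: sum.union_disjoint small_def large_def add_mono sum_mono)
  also have "(\<Sum>k\<in>small. A * (l / 2 ^ k) powr \<alpha>)
      = A * \<tau> powr \<alpha> * (\<Sum>k\<in>small. (l / \<tau> / 2 ^ k) powr \<alpha>)"
    using \<open>0 < \<tau>\<close> \<open>0 < l\<close> by (simp add: sum_distrib_left powr_divide powr_mult)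
  also have "\<dots> \<le> A * \<tau> powr \<alpha> * (1 / (1 - 2 powr (- \<alpha>)))"
    unfolding small_def using assms by (intro mult_left_mono sum_powr_halving_le) auto
  also have "(\<Sum>k\<in>large. B * \<tau> powr \<beta> * (l / 2 ^ k) powr (\<alpha> - \<beta>))
      = B * \<tau> powr \<alpha> * (\<Sum>k\<in>large. (\<tau> / l * 2 ^ k) powr (\<beta> - \<alpha>))"
    using \<open>0 < \<tau>\<close> \<open>0 < l\<close>
    by (simp add: sum_distrib_left powr_divide powr_diff powr_mult field_simps)
  also have "\<dots> \<le> B * \<tau> powr \<alpha> * (1 / (1 - 2 powr (- (\<beta> - \<alpha>))))"
    unfolding large_def using assms by (intro mult_left_mono sum_powr_doubling_le) auto
  finally show ?thesis by (simp add: algebra_simps)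
qed

lemma sum_good_dyadic_cubes_le:
  fixes P :: "'a::euclidean_space \<Rightarrow> 'a" and kap :: "'a \<Rightarrow> real" and e :: "nat \<Rightarrow> 'a"
  assumes "DIM('a) = Suc m" and "0 < m" "0 < p" "0 < \<alpha>" "\<alpha> < real m" "0 < \<tau>" "0 < l0" "l0 \<le> L"
    and orthonormal: "\<And>i j. i < m \<Longrightarrow> j < m \<Longrightarrow> e i \<bullet> e j = (if i = j then 1 else 0)"
    and "cube e m c0 (6 * l0) \<subseteq> P ` V" and "inj_on P V" and "1-lipschitz_on UNIV P"
    and "V \<subseteq> V'" and "\<And>x. 0 \<le> kap x"
    and "\<And>t. 0 < t \<Longrightarrow>
      ennreal (t powr p) * hausdorff_measure (real m) {x \<in> V'. kap x < 1 / t} \<le> ennreal M"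
    and "finite F"
    and F: "\<And>q. q \<in> F \<Longrightarrow> dyadic_index m q \<and>
      good_cube e m c0 l0 (\<lambda>y. kap (the_inv_into V P y) powr (1 / (real m / p))) \<tau> q"
  shows "(\<Sum>q\<in>F. dyadic_side l0 q powr (real m + \<alpha>))
    \<le> (L ^ m / (1 - 2 powr (- \<alpha>))
        + slab_constant m * max M 0 * 2 powr p / (1 - 2 powr (- (real m - \<alpha>)))) * \<tau> powr \<alpha>"
proof -
  obtain bb :: "nat \<Rightarrow> 'a" where "bij_betw bb {..<Suc m} Basis"
    using ex_bij_betw_nat_finite[OF finite_Basis] \<open>DIM('a) = Suc m\<close> by (metis atLeast0LessThan)
  then interpret tangent_frame bb m e c0
    using orthonormal by unfold_locales
  define K where "K = slab_constant m * max M 0 * 2 powr p"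
  have "0 \<le> K"
    unfolding K_def slab_constant_def using hausdorff_normalization_pos[of "real m"] by simp
  obtain N where N: "fst ` F \<subseteq> {..<N}"
    using finite_nat_bounded[OF finite_imageI[OF \<open>finite F\<close>]] by blast
  have "(\<Sum>q\<in>F. dyadic_side l0 q powr (real m + \<alpha>))
      = (\<Sum>k<N. \<Sum>q\<in>{q \<in> F. fst q = k}. dyadic_side l0 q powr (real m + \<alpha>))"
    using \<open>finite F\<close> N by (intro sum.group[symmetric]) auto
  also have "\<dots> \<le> (\<Sum>k<N. min (L ^ m * (l0 / 2 ^ k) powr \<alpha>)
                               (K * \<tau> powr real m * (l0 / 2 ^ k) powr (\<alpha> - real m)))"
  proof (rule sum_mono)
    fix k
    have "l0 ^ m * (l0 / 2 ^ k) powr \<alpha> \<le> L ^ m * (l0 / 2 ^ k) powr \<alpha>"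
      using \<open>0 < l0\<close> \<open>l0 \<le> L\<close> by (intro mult_right_mono power_mono) auto
    moreover have "(\<Sum>q\<in>{q \<in> F. fst q = k}. dyadic_side l0 q powr (real m + \<alpha>))
        \<le> min (l0 ^ m * (l0 / 2 ^ k) powr \<alpha>) (K * \<tau> powr real m * (l0 / 2 ^ k) powr (\<alpha> - real m))"
      unfolding K_def using assms F
      by (intro sum_good_dyadic_generation_le[where V'=V' and M=M and P=P and V=V and kap=kap]) auto
    ultimately show "(\<Sum>q\<in>{q \<in> F. fst q = k}. dyadic_side l0 q powr (real m + \<alpha>))
        \<le> min (L ^ m * (l0 / 2 ^ k) powr \<alpha>) (K * \<tau> powr real m * (l0 / 2 ^ k) powr (\<alpha> - real m))"
      by linarith
  qed
  also have "\<dots> \<le> (L ^ m / (1 - 2 powr (- \<alpha>)) + K / (1 - 2 powr (- (real m - \<alpha>)))) * \<tau> powr \<alpha>"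
    using assms \<open>0 \<le> K\<close> by (intro sum_min_dyadic_powr_le) auto
  finally show ?thesis unfolding K_def .
qed

section \<open>The boundary chart\<close>

lemma tproj_self: "tproj x0 \<nu> x0 = x0"
  unfolding tproj_def by simp

lemma tproj_lipschitz:
  fixes \<nu> :: "'a::euclidean_space"
  assumes "norm \<nu> = 1"
  shows "1-lipschitz_on UNIV (tproj x0 \<nu>)"
proof (rule lipschitz_onI)
  fix x y :: 'a
  define v where "v = x - y"
  have "tproj x0 \<nu> x - tproj x0 \<nu> y = v - (v \<bullet> \<nu>) *\<^sub>R \<nu>"
    unfolding tproj_def v_def by (simp add: algebra_simps)
  moreover have "(v - (v \<bullet> \<nu>) *\<^sub>R \<nu>) \<bullet> (v - (v \<bullet> \<nu>) *\<^sub>R \<nu>) = v \<bullet> v - (v \<bullet> \<nu>)\<^sup>2"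
    using assms by (simp add: norm_eq_1 inner_commute power2_eq_square algebra_simps)
  ultimately have "norm (tproj x0 \<nu> x - tproj x0 \<nu> y) \<le> norm v"
    by (simp add: norm_le)
  then show "dist (tproj x0 \<nu> x) (tproj x0 \<nu> y) \<le> 1 * dist x y"
    by (simp add: dist_norm v_def)
qed simp

lemma kappa_nonneg: "0 \<le> kappa \<mu> (\<nu>::'a::euclidean_space)"
  unfolding kappa_def
proof (rule cInf_greatest)
  obtain b :: 'a where b: "b \<in> Basis" using nonempty_Basis by blast
  then have "b \<in> int_lattice" "b \<noteq> 0" unfolding int_lattice_def by (auto simp: inner_Basis)
  then show "{norm (\<xi> - (\<nu> \<bullet> \<xi>) *\<^sub>R \<nu>) * norm \<xi> powr \<mu> |\<xi>. \<xi> \<in> int_lattice \<and> \<xi> \<noteq> 0} \<noteq> {}"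
    by blast
qed auto

lemma smooth_boundary_normal_norm:
  assumes "smooth_boundary_normal \<Omega> n" and "x \<in> frontier \<Omega>"
  shows "norm (n x) = 1"
proof -
  from assms obtain G where "G x \<noteq> 0" "n x = (1 / norm (G x)) *\<^sub>R G x"
    unfolding smooth_boundary_normal_def by blast
  then show ?thesis by simp
qed

lemma chart_good_cubes_sum_le:
  fixes \<Omega> :: "'a::euclidean_space set" and n :: "'a \<Rightarrow> 'a" and e :: "nat \<Rightarrow> 'a"
  assumes "DIM('a) = Suc m" and "0 < m" "0 < p" "0 < \<alpha>" "\<alpha> < real m"
    and normal: "smooth_boundary_normal \<Omega> n" and "x0 \<in> frontier \<Omega>" and "r0 < 1"
    and orthonormal: "\<And>i j. i < m \<Longrightarrow> j < m \<Longrightarrow> e i \<bullet> e j = (if i = j then 1 else 0)"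
    and "0 < l0" and "0 < \<tau>"
    and inj: "inj_on (tproj x0 (n x0)) (W \<inter> frontier \<Omega>)"
    and cover: "cube e m c0 (6 * l0) \<subseteq> tproj x0 (n x0) ` (W \<inter> frontier \<Omega>)"
    and near: "{x \<in> W \<inter> frontier \<Omega>. tproj x0 (n x0) x \<in> cube e m c0 l0}
      \<subseteq> ball x0 (4 * r0 * sqrt (real DIM('a))) \<inter> frontier \<Omega>"
    and weak: "\<And>t. 0 < t \<Longrightarrow> ennreal (t powr p) *
      hausdorff_measure (real m) {x \<in> frontier \<Omega>. kappa \<mu> (n x) < 1 / t} \<le> ennreal M"
  shows "(\<Sum>\<^sub>\<infinity>q\<in>maximal_good_cubes e m c0 l0
            (\<lambda>y. kappa \<mu> (n (the_inv_into (W \<inter> frontier \<Omega>) (tproj x0 (n x0)) y))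
                   powr (1 / (real m / p))) \<tau>.
           ennreal (dyadic_side l0 q powr (real m + \<alpha>)))
    \<le> ennreal (((8 * sqrt (real DIM('a))) ^ m / (1 - 2 powr (- \<alpha>))
        + slab_constant m * max M 0 * 2 powr p / (1 - 2 powr (- (real m - \<alpha>)))) * \<tau> powr \<alpha>)"
proof -
  define P where "P = tproj x0 (n x0)"
  define V where "V = W \<inter> frontier \<Omega>"
  have "V \<subseteq> frontier \<Omega>" unfolding V_def by blast
  have "1-lipschitz_on UNIV P"
    unfolding P_def by (intro tproj_lipschitz smooth_boundary_normal_norm[OF normal \<open>x0 \<in> frontier \<Omega>\<close>])
  have "l0 < 2 * (4 * r0 * sqrt (real DIM('a)))"
  proof (rule cube_side_less)
    show "norm (e 0) = 1" using orthonormal[OF \<open>0 < m\<close> \<open>0 < m\<close>] by (simp add: norm_eq_1)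
    fix y assume y: "y \<in> cube e m c0 l0"
    then have "y \<in> P ` V" using cover cube_mono[of l0 "6 * l0" e m c0] \<open>0 < l0\<close> by (auto simp: P_def V_def)
    then obtain x where "x \<in> V" "y = P x" by blast
    then have "dist x0 x < 4 * r0 * sqrt (real DIM('a))"
      using near y unfolding P_def V_def by (auto simp: dist_commute)
    then show "dist x0 y < 4 * r0 * sqrt (real DIM('a))"
      using lipschitz_onD[OF \<open>1-lipschitz_on UNIV P\<close>, of x0 x] tproj_self[of x0 "n x0"]
      unfolding \<open>y = P x\<close> P_def by simp
  qed (use \<open>0 < m\<close> \<open>0 < l0\<close> in auto)
  moreover have "r0 * sqrt (real DIM('a)) \<le> 1 * sqrt (real DIM('a))"
    using \<open>r0 < 1\<close> by (intro mult_right_mono) auto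
  ultimately have "l0 \<le> 8 * sqrt (real DIM('a))"
    unfolding mult.assoc by linarith
  show ?thesis
    unfolding P_def[symmetric] V_def[symmetric]
  proof (rule infsum_ennreal_le_of_finite_sums)
    fix F assume "finite F"
      and F: "F \<subseteq> maximal_good_cubes e m c0 l0 (\<lambda>y. kappa \<mu> (n (the_inv_into V P y)) powr (1 / (real m / p))) \<tau>"
    have good: "dyadic_index m q \<and>
        good_cube e m c0 l0 (\<lambda>y. kappa \<mu> (n (the_inv_into V P y)) powr (1 / (real m / p))) \<tau> q"
      if "q \<in> F" for q
      using F that unfolding maximal_good_cubes_def by blast
    show "(\<Sum>q\<in>F. dyadic_side l0 q powr (real m + \<alpha>))
        \<le> ((8 * sqrt (real DIM('a))) ^ m / (1 - 2 powr (- \<alpha>))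
           + slab_constant m * max M 0 * 2 powr p / (1 - 2 powr (- (real m - \<alpha>)))) * \<tau> powr \<alpha>"
      by (rule sum_good_dyadic_cubes_le[OF assms(1-5) \<open>0 < \<tau>\<close> \<open>0 < l0\<close>
          \<open>l0 \<le> 8 * sqrt (real DIM('a))\<close> orthonormal cover[folded P_def V_def] inj[folded P_def V_def]
          \<open>1-lipschitz_on UNIV P\<close> \<open>V \<subseteq> frontier \<Omega>\<close> kappa_nonneg weak \<open>finite F\<close> good])
  qed simp
qed

theorem lemma5p3:
  fixes \<Omega> :: "'a::euclidean_space set" and n :: "'a \<Rightarrow> 'a" and \<mu> p :: real
  assumes "bounded \<Omega>" and "open \<Omega>" and "connected \<Omega>"
    and "smooth_boundary_normal \<Omega> n"
    and "\<mu> > 0" and "p > 0" and "p \<le> real DIM('a) - 1"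
    and "\<exists>M. \<forall>t>0. ennreal (t powr p) *
            hausdorff_measure (real DIM('a) - 1) {x \<in> frontier \<Omega>. kappa \<mu> (n x) < 1 / t}
          \<le> ennreal M"
  shows "\<exists>rbar>0. \<forall>\<alpha>. 0 < \<alpha> \<and> \<alpha> < real DIM('a) - 1 \<longrightarrow>
    (\<exists>C. \<forall>x0 r0 (e :: nat \<Rightarrow> 'a) c0 l0 W.
       x0 \<in> frontier \<Omega> \<and> 0 < r0 \<and> r0 < rbar \<and>
       (\<forall>i<DIM('a) - 1. \<forall>j<DIM('a) - 1. e i \<bullet> e j = (if i = j then 1 else 0)) \<and>
       (\<forall>i<DIM('a) - 1. e i \<bullet> n x0 = 0) \<and>
       (c0 - x0) \<bullet> n x0 = 0 \<and> 0 < l0 \<and>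
       open W \<and> x0 \<in> W \<and>
       inj_on (tproj x0 (n x0)) (W \<inter> frontier \<Omega>) \<and>
       cube e (DIM('a) - 1) c0 (6 * l0) \<subseteq> tproj x0 (n x0) ` (W \<inter> frontier \<Omega>) \<and>
       ball x0 (2 * r0) \<inter> frontier \<Omega>
         \<subseteq> {x \<in> W \<inter> frontier \<Omega>. tproj x0 (n x0) x \<in> cube e (DIM('a) - 1) c0 l0} \<and>
       {x \<in> W \<inter> frontier \<Omega>. tproj x0 (n x0) x \<in> cube e (DIM('a) - 1) c0 l0}
         \<subseteq> ball x0 (4 * r0 * sqrt (real DIM('a))) \<inter> frontier \<Omega>
       \<longrightarrow>
       (\<exists>\<tau>0>0. \<forall>\<tau>. 0 < \<tau> \<and> \<tau> < \<tau>0 \<longrightarrow>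
          (\<Sum>\<^sub>\<infinity>q\<in>maximal_good_cubes e (DIM('a) - 1) c0 l0
                 (\<lambda>y. kappa \<mu> (n (the_inv_into (W \<inter> frontier \<Omega>) (tproj x0 (n x0)) y))
                        powr (1 / ((real DIM('a) - 1) / p))) \<tau>.
             ennreal (dyadic_side l0 q powr (real DIM('a) - 1 + \<alpha>)))
          \<le> ennreal (C * \<tau> powr \<alpha>)))"
proof -
  define m where "m = DIM('a) - 1"
  have "1 < DIM('a)" using assms(6,7) by linarith
  then have dim: "DIM('a) = Suc m" and "0 < m" and rm: "real DIM('a) - 1 = real m"
    unfolding m_def by auto
  obtain M where weak: "\<And>t. 0 < t \<Longrightarrow> ennreal (t powr p) *
      hausdorff_measure (real m) {x \<in> frontier \<Omega>. kappa \<mu> (n x) < 1 / t} \<le> ennreal M"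
    using assms(8) unfolding rm by blast
  text \<open>The radius bound and the threshold for \<open>\<tau>\<close> can both be taken to be 1.\<close>
  note chart = chart_good_cubes_sum_le[OF dim \<open>0 < m\<close> \<open>0 < p\<close> _ _ assms(4) _ _ _ _ _ _ _ _ weak]
  show ?thesis
    unfolding rm m_def[symmetric]
    by (rule exI[of _ 1], intro conjI allI impI, simp, rule exI, intro allI impI, elim conjE,
        rule exI[of _ 1], intro conjI allI impI, simp, rule chart) auto
qed

end
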